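(* Let $G$ be a simple graph with $n$ vertices and let $G'$ be obtained from $G$ by a symmetric $\mathcal K_{xy}$-operation. Then $P(\lambda,G)\ge P(\lambda,G')$ for every real $\lambda\ge n$.
   Context: All graphs are finite, undirected, without loops. For a graph $G$ on $n$ vertices let $L(G)=D(G)-A(G)$ be its Laplacian matrix ($D(G)$ diagonal degree matrix, $A(G)$ adjacency matrix). Write $\det(\lambda I-L(G))=\lambda P(\lambda,G)$; $P(\lambda,G)$ is the Laplacian polynomial. $\mathcal K_{xy}$-operation: let $G$ be a simple graph, $x\ne y$ vertices, $\mathcal K$ an induced subgraph of $G$ containing $x$ and $y$, and $N(v)$ the neighbourhood of $v$. Put $X=N(x)\setminus(V(\mathcal K)\cup N(y))$, $Y=N(y)\setminus(V(\mathcal K)\cup N(x))$, $[x,X]=\{xv:v\in X\}$, $[y,X]=\{yv:v\in X\}$, $[y,Y]=\{yv:v\in Y\}$. The graph $\mathcal K_{xy}(G)=(G-[x,X])\cup[y,X]$ (on the same vertex set) is obtained from $G$ by the $\mathcal K_{xy}$-operation. The operation is called symmetric if the graph $G-([x,X]\cup[y,Y])$ has an automorphism $\alpha$ with $\alpha(x)=y$, $\alpha(y)=x$, $\alpha(V(\mathcal K))=V(\mathcal K)$, and $\alpha(v)=v$ for every $v\in X\cup Y$. *)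

theory Defs
  imports "Jordan_Normal_Form.Char_Poly"
begin

definition simple_graph :: "nat \<Rightarrow> (nat \<Rightarrow> nat \<Rightarrow> bool) \<Rightarrow> bool" where
  "simple_graph n E \<longleftrightarrow> (\<forall>u v. E u v \<longrightarrow> u < n \<and> v < n) \<and>
     (\<forall>u v. E u v \<longrightarrow> E v u) \<and> (\<forall>u. \<not> E u u)"

definition nbhd :: "(nat \<Rightarrow> nat \<Rightarrow> bool) \<Rightarrow> nat \<Rightarrow> nat set" where
  "nbhd E v = {u. E v u}"

definition laplacian :: "nat \<Rightarrow> (nat \<Rightarrow> nat \<Rightarrow> bool) \<Rightarrow> real mat" where
  "laplacian n E = mat n n (\<lambda>(i,j). if i = j then real (card (nbhd E i))
                                    else if E i j then -1 else 0)"

text \<open>Laplacian polynomial: det(\<lambda>I - L) = \<lambda> P(\<lambda>).\<close>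
definition lap_poly :: "nat \<Rightarrow> (nat \<Rightarrow> nat \<Rightarrow> bool) \<Rightarrow> real poly" where
  "lap_poly n E = char_poly (laplacian n E) div [:0, 1:]"

definition Xset :: "(nat \<Rightarrow> nat \<Rightarrow> bool) \<Rightarrow> nat set \<Rightarrow> nat \<Rightarrow> nat \<Rightarrow> nat set" where
  "Xset E K x y = nbhd E x - (K \<union> nbhd E y)"

definition del_star :: "(nat \<Rightarrow> nat \<Rightarrow> bool) \<Rightarrow> nat \<Rightarrow> nat set \<Rightarrow> nat \<Rightarrow> nat \<Rightarrow> bool" where
  "del_star E x S u v \<longleftrightarrow> E u v \<and> \<not> ((u = x \<and> v \<in> S) \<or> (v = x \<and> u \<in> S))"

definition Kxy_op :: "(nat \<Rightarrow> nat \<Rightarrow> bool) \<Rightarrow> nat set \<Rightarrow> nat \<Rightarrow> nat \<Rightarrow> nat \<Rightarrow> nat \<Rightarrow> bool" where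
  "Kxy_op E K x y u v \<longleftrightarrow>
     del_star E x (Xset E K x y) u v \<or>
     (u = y \<and> v \<in> Xset E K x y) \<or> (v = y \<and> u \<in> Xset E K x y)"

definition graph_aut :: "nat \<Rightarrow> (nat \<Rightarrow> nat \<Rightarrow> bool) \<Rightarrow> (nat \<Rightarrow> nat) \<Rightarrow> bool" where
  "graph_aut n E \<alpha> \<longleftrightarrow> bij_betw \<alpha> {0..<n} {0..<n} \<and>
     (\<forall>u<n. \<forall>v<n. E u v \<longleftrightarrow> E (\<alpha> u) (\<alpha> v))"

text \<open>Valid K_xy-operation data: K \<subseteq> V (the induced subgraph on K), x \<noteq> y in K.\<close>
definition Kxy_valid :: "nat \<Rightarrow> (nat \<Rightarrow> nat \<Rightarrow> bool) \<Rightarrow> nat set \<Rightarrow> nat \<Rightarrow> nat \<Rightarrow> bool" where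
  "Kxy_valid n E K x y \<longleftrightarrow> K \<subseteq> {0..<n} \<and> x \<in> K \<and> y \<in> K \<and> x \<noteq> y"

definition Kxy_symmetric :: "nat \<Rightarrow> (nat \<Rightarrow> nat \<Rightarrow> bool) \<Rightarrow> nat set \<Rightarrow> nat \<Rightarrow> nat \<Rightarrow> bool" where
  "Kxy_symmetric n E K x y \<longleftrightarrow>
     (\<exists>\<alpha>. graph_aut n (del_star (del_star E x (Xset E K x y)) y (Xset E K y x)) \<alpha> \<and>
          \<alpha> x = y \<and> \<alpha> y = x \<and> \<alpha> ` K = K \<and>
          (\<forall>v \<in> Xset E K x y \<union> Xset E K y x. \<alpha> v = v))"

end

theory Submission
  imports Defs
begin

text \<open>
  For \<open>\<lambda> \<noteq> 0\<close> we have \<open>P(\<lambda>, G) = det(\<lambda>I - L(G)) / \<lambda>\<close>, so it suffices to compare the two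
  determinants for \<open>\<lambda> > n\<close>; the case \<open>\<lambda> = n\<close> follows by continuity.  Let \<open>X\<close>, \<open>Y\<close> be the
  private neighbourhoods of \<open>x\<close> and \<open>y\<close>.  Both \<open>G\<close> and \<open>G' = K\<^sub>x\<^sub>y(G)\<close> differ from a
  "middle" fractional graph \<open>M\<close> (the core \<open>G - [x,X] - [y,Y]\<close> plus half of every edge between
  \<open>{x, y}\<close> and \<open>X \<union> Y\<close>) by a symmetric rank-two term \<open>c (m s\<^sup>T + s m\<^sup>T)\<close>, where
  \<open>m = e\<^sub>x - e\<^sub>y\<close> and \<open>s\<close> is the sum or difference of the balanced stars \<open>a\<close>, \<open>b\<close> of
  \<open>X\<close>, \<open>Y\<close>.  With \<open>S = \<lambda>I - L(M)\<close> and \<open>T = S\<^sup>-\<^sup>1\<close>, the matrix determinant lemma gives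
  \<open>det(S + c(m s\<^sup>T + s m\<^sup>T)) = det S \<cdot> (1 - c\<^sup>2 (s\<^sup>T T s) (m\<^sup>T T m))\<close>: the cross terms
  vanish because the automorphism swapping \<open>x\<close> and \<open>y\<close> forces \<open>(T s)\<^sub>x = (T s)\<^sub>y\<close>.
  Hence \<open>det(\<lambda>I - L(G)) - det(\<lambda>I - L(G')) = det S \<cdot> (m\<^sup>T T m) \<cdot> (a\<^sup>T T b)\<close>, and a
  discrete maximum principle for \<open>S\<close> shows that all three factors are non-negative.
\<close>

section \<open>Symmetric rank-two updates of determinants\<close>

lemma det_sylvester:
  fixes S :: "'a :: idom mat"
  assumes S: "S \<in> carrier_mat n n" and Si: "Si \<in> carrier_mat n n" and SSi: "S * Si = 1\<^sub>m n"
    and U: "U \<in> carrier_mat n k" and W: "W \<in> carrier_mat k n"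
  shows "det (S + U * W) = det S * det (1\<^sub>m k + W * Si * U)"
proof -
  define M where "M = four_block_mat S (-U) W (1\<^sub>m k)"
  define N1 where "N1 = four_block_mat (1\<^sub>m n) (0\<^sub>m n k) (-W) (1\<^sub>m k)"
  define N2 where "N2 = four_block_mat S (0\<^sub>m n k) W (1\<^sub>m k)"
  define N3 where "N3 = four_block_mat (1\<^sub>m n) (-(Si * U)) (0\<^sub>m k n) (1\<^sub>m k + W * Si * U)"
  have cM: "M \<in> carrier_mat (n+k) (n+k)" and cN1: "N1 \<in> carrier_mat (n+k) (n+k)"
    and cN2: "N2 \<in> carrier_mat (n+k) (n+k)" and cN3: "N3 \<in> carrier_mat (n+k) (n+k)"
    unfolding M_def N1_def N2_def N3_def using S Si U W by auto
  have "M * N1 = four_block_mat (S * 1\<^sub>m n + (-U) * (-W)) (S * 0\<^sub>m n k + (-U) * 1\<^sub>m k)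
      (W * 1\<^sub>m n + 1\<^sub>m k * (-W)) (W * 0\<^sub>m n k + 1\<^sub>m k * 1\<^sub>m k)"
    unfolding M_def N1_def by (rule mult_four_block_mat, insert S U W, auto)
  also have "\<dots> = four_block_mat (S + U * W) (-U) (0\<^sub>m k n) (1\<^sub>m k)"
    using S U W by (intro cong_four_block_mat, auto)
  finally have MN1: "M * N1 = four_block_mat (S + U * W) (-U) (0\<^sub>m k n) (1\<^sub>m k)" .
  have "det (M * N1) = det (S + U * W)"
    unfolding MN1 by (subst det_four_block_mat_lower_left_zero[of _ n _ k], insert S U W, auto)
  moreover have "det N1 = 1"
    unfolding N1_def by (subst det_four_block_mat_upper_right_zero[of _ n _ k], insert W, auto)
  moreover have "N2 * N3 = M"
  proof -
    have "N2 * N3 = four_block_mat (S * 1\<^sub>m n + 0\<^sub>m n k * 0\<^sub>m k n)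
        (S * (-(Si * U)) + 0\<^sub>m n k * (1\<^sub>m k + W * Si * U))
        (W * 1\<^sub>m n + 1\<^sub>m k * 0\<^sub>m k n) (W * (-(Si * U)) + 1\<^sub>m k * (1\<^sub>m k + W * Si * U))"
      unfolding N2_def N3_def by (rule mult_four_block_mat, insert S Si U W, auto)
    moreover have "S * (-(Si * U)) = - U"
      using S Si U SSi by (simp add: assoc_mult_mat[symmetric])
    moreover have "W * (-(Si * U)) + 1\<^sub>m k * (1\<^sub>m k + W * Si * U) = 1\<^sub>m k"
      using W Si U by (intro eq_matI) (auto simp: assoc_mult_mat[of W k n Si n U k])
    ultimately show ?thesis unfolding M_def using S U W by (auto intro!: cong_four_block_mat)
  qed
  moreover have "det N2 = det S"
    unfolding N2_def by (subst det_four_block_mat_upper_right_zero[of _ n _ k], insert S W, auto)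
  moreover have "det N3 = det (1\<^sub>m k + W * Si * U)"
    unfolding N3_def by (subst det_four_block_mat_lower_left_zero[of _ n _ k], insert Si U W, auto)
  ultimately show ?thesis using det_mult[OF cM cN1] det_mult[OF cN2 cN3] by simp
qed

lemma det_2x2:
  assumes "(A :: 'a :: comm_ring_1 mat) \<in> carrier_mat 2 2"
  shows "det A = A $$ (0,0) * A $$ (1,1) - A $$ (0,1) * A $$ (1,0)"
proof -
  have "det A = (\<Sum>j<2. A $$ (0,j) * cofactor A 0 j)"
    by (rule laplace_expansion_row[OF assms], simp)
  also have "\<dots> = A $$ (0,0) * cofactor A 0 0 + A $$ (0,1) * cofactor A 0 1"
    by (simp add: numeral_2_eq_2)
  also have "cofactor A 0 0 = A $$ (1,1)"
    unfolding cofactor_def using assms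
    by (subst det_single, auto simp: mat_delete_def insert_index_def)
  also have "cofactor A 0 1 = - A $$ (1,0)"
    unfolding cofactor_def using assms
    by (subst det_single, auto simp: mat_delete_def insert_index_def)
  finally show ?thesis by simp
qed

definition sym_outer :: "nat \<Rightarrow> real vec \<Rightarrow> real vec \<Rightarrow> real mat" where
  "sym_outer n m s = mat n n (\<lambda>(i,j). m $ i * s $ j + s $ i * m $ j)"

lemma sym_outer_index:
  "i < n \<Longrightarrow> j < n \<Longrightarrow> sym_outer n m s $$ (i, j) = m $ i * s $ j + s $ i * m $ j"
  unfolding sym_outer_def by simp

lemma sym_outer_add_diff:
  assumes "a \<in> carrier_vec n" "b \<in> carrier_vec n" "i < n" "j < n"
  shows "sym_outer n m (a + b) $$ (i, j) = sym_outer n m a $$ (i, j) + sym_outer n m b $$ (i, j)"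
    and "sym_outer n m (a - b) $$ (i, j) = sym_outer n m a $$ (i, j) - sym_outer n m b $$ (i, j)"
  using assms by (simp_all add: sym_outer_index algebra_simps)

text \<open>Matrix determinant lemma for a symmetric rank-two update: write
  \<open>c(m s\<^sup>T + s m\<^sup>T) = U W\<close> with \<open>U = [m s]\<close>, \<open>W = c [s m]\<^sup>T\<close> and expand the resulting
  \<open>2 \<times> 2\<close> determinant.\<close>
lemma det_sym_rank2_update:
  fixes S :: "real mat"
  assumes S: "S \<in> carrier_mat n n" and Si: "Si \<in> carrier_mat n n" and SSi: "S * Si = 1\<^sub>m n"
    and m: "m \<in> carrier_vec n" and s: "s \<in> carrier_vec n"
  shows "det (S + c \<cdot>\<^sub>m sym_outer n m s)
    = det S * ((1 + c * (s \<bullet> (Si *\<^sub>v m))) * (1 + c * (m \<bullet> (Si *\<^sub>v s)))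
         - c\<^sup>2 * (s \<bullet> (Si *\<^sub>v s)) * (m \<bullet> (Si *\<^sub>v m)))"
proof -
  define U where "U = mat_of_cols n [m, s]"
  define W where "W = mat_of_rows n [c \<cdot>\<^sub>v s, c \<cdot>\<^sub>v m]"
  have U: "U \<in> carrier_mat n 2" and W: "W \<in> carrier_mat 2 n"
    unfolding U_def W_def by (auto simp: numeral_2_eq_2)
  have UW: "U * W = c \<cdot>\<^sub>m sym_outer n m s"
    by (rule eq_matI, insert m s, auto simp: U_def W_def sym_outer_def mat_of_cols_def
        mat_of_rows_def scalar_prod_def numeral_2_eq_2 algebra_simps)
  define B where "B = 1\<^sub>m 2 + W * Si * U"
  have B: "B \<in> carrier_mat 2 2" unfolding B_def using W Si U by auto
  have entry: "B $$ (a, b) = (if a = b then 1 else 0) + row W a \<bullet> (Si *\<^sub>v col U b)"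
    if "a < 2" "b < 2" for a b
    using that W Si U unfolding B_def
    by (simp add: assoc_mult_mat[OF W Si U] mult_mat_vec_def)
  have cols: "col U 0 = m" "col U 1 = s" and rows: "row W 0 = c \<cdot>\<^sub>v s" "row W 1 = c \<cdot>\<^sub>v m"
    unfolding U_def W_def using m s by auto
  have Si_vec: "Si *\<^sub>v m \<in> carrier_vec n" "Si *\<^sub>v s \<in> carrier_vec n" using Si m s by auto
  have "det (S + U * W) = det S * det B" unfolding B_def by (rule det_sylvester[OF S Si SSi U W])
  also have "det B = B $$ (0,0) * B $$ (1,1) - B $$ (0,1) * B $$ (1,0)" by (rule det_2x2[OF B])
  finally show ?thesis
    unfolding UW using entry[of 0 0] entry[of 0 1] entry[of 1 0] entry[of 1 1] cols rows Si_vec m s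
    by (simp add: power2_eq_square algebra_simps)
qed

lemma sym_mat_scalar_prod:
  fixes M :: "real mat"
  assumes M: "M \<in> carrier_mat n n" and sym: "\<And>i j. i < n \<Longrightarrow> j < n \<Longrightarrow> M $$ (i,j) = M $$ (j,i)"
    and a: "a \<in> carrier_vec n" and b: "b \<in> carrier_vec n"
  shows "(M *\<^sub>v a) \<bullet> b = a \<bullet> (M *\<^sub>v b)"
proof -
  have "(M *\<^sub>v a) \<bullet> b = (\<Sum>i\<in>{0..<n}. \<Sum>j\<in>{0..<n}. M $$ (i,j) * a $ j * b $ i)"
    using M a b by (simp add: scalar_prod_def row_def sum_distrib_right)
  also have "\<dots> = (\<Sum>j\<in>{0..<n}. \<Sum>i\<in>{0..<n}. M $$ (j,i) * a $ j * b $ i)"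
    by (subst sum.swap, intro sum.cong refl, simp add: sym)
  also have "\<dots> = a \<bullet> (M *\<^sub>v b)"
    using M a b by (simp add: scalar_prod_def row_def sum_distrib_left ac_simps)
  finally show ?thesis .
qed

lemma quad_polarization:
  fixes T :: "real mat"
  assumes T: "T \<in> carrier_mat n n" and a: "a \<in> carrier_vec n" and b: "b \<in> carrier_vec n"
    and sym: "b \<bullet> (T *\<^sub>v a) = a \<bullet> (T *\<^sub>v b)"
  shows "(a + b) \<bullet> (T *\<^sub>v (a + b)) - (a - b) \<bullet> (T *\<^sub>v (a - b)) = 4 * (a \<bullet> (T *\<^sub>v b))"
proof -
  have Ta: "T *\<^sub>v a \<in> carrier_vec n" and Tb: "T *\<^sub>v b \<in> carrier_vec n" using T a b by auto
  have "(a + b) \<bullet> (T *\<^sub>v (a + b)) = a \<bullet> (T *\<^sub>v a) + a \<bullet> (T *\<^sub>v b) + b \<bullet> (T *\<^sub>v a) + b \<bullet> (T *\<^sub>v b)"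
    using a b Ta Tb by (simp add: mult_add_distrib_mat_vec[OF T a b] add_scalar_prod_distrib[of a n b]
        scalar_prod_add_distrib[of _ n])
  moreover have "(a - b) \<bullet> (T *\<^sub>v (a - b)) = a \<bullet> (T *\<^sub>v a) - a \<bullet> (T *\<^sub>v b) - b \<bullet> (T *\<^sub>v a) + b \<bullet> (T *\<^sub>v b)"
    using a b Ta Tb by (simp add: mult_minus_distrib_mat_vec[OF T a b] minus_scalar_prod_distrib[of a n b]
        scalar_prod_minus_distrib[of _ n])
  ultimately show ?thesis using sym by simp
qed

section \<open>Weighted Laplacians and the maximum principle\<close>

definition weighted_laplacian :: "nat \<Rightarrow> (nat \<Rightarrow> nat \<Rightarrow> real) \<Rightarrow> real mat" where
  "weighted_laplacian n w =
     mat n n (\<lambda>(i,j). if i = j then (\<Sum>k\<in>{0..<n}-{i}. w i k) else - w i j)"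

definition shifted_lap :: "nat \<Rightarrow> (nat \<Rightarrow> nat \<Rightarrow> real) \<Rightarrow> real \<Rightarrow> real mat" where
  "shifted_lap n w lam = lam \<cdot>\<^sub>m 1\<^sub>m n - weighted_laplacian n w"

lemma weighted_laplacian_carrier [simp]: "weighted_laplacian n w \<in> carrier_mat n n"
  unfolding weighted_laplacian_def by auto

lemma shifted_lap_carrier [simp]: "shifted_lap n w lam \<in> carrier_mat n n"
  unfolding shifted_lap_def by (rule minus_carrier_mat, simp)

lemma shifted_lap_dim [simp]: "dim_row (shifted_lap n w lam) = n" "dim_col (shifted_lap n w lam) = n"
  unfolding shifted_lap_def weighted_laplacian_def by auto

lemma shifted_lap_index:
  "i < n \<Longrightarrow> j < n \<Longrightarrow> shifted_lap n w lam $$ (i,j) =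
     (if i = j then lam - (\<Sum>k\<in>{0..<n}-{i}. w i k) else w i j)"
  unfolding shifted_lap_def weighted_laplacian_def by auto

lemma shifted_lap_mult_vec:
  assumes i: "i < n" and v: "v \<in> carrier_vec n"
  shows "(shifted_lap n w lam *\<^sub>v v) $ i = lam * v $ i - (\<Sum>k\<in>{0..<n}. w i k * (v $ i - v $ k))"
proof -
  let ?S = "shifted_lap n w lam" and ?R = "{0..<n} - {i}"
  have "(?S *\<^sub>v v) $ i = (\<Sum>j\<in>{0..<n}. ?S $$ (i,j) * v $ j)"
    using i v by (simp add: scalar_prod_def row_def)
  also have "\<dots> = ?S $$ (i,i) * v $ i + (\<Sum>j\<in>?R. ?S $$ (i,j) * v $ j)"
    using i by (subst sum.remove[of _ i]) auto
  also have "(\<Sum>j\<in>?R. ?S $$ (i,j) * v $ j) = (\<Sum>j\<in>?R. w i j * v $ j)"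
    using i by (intro sum.cong, auto simp: shifted_lap_index)
  also have "(\<Sum>k\<in>{0..<n}. w i k * (v $ i - v $ k)) = (\<Sum>k\<in>?R. w i k) * v $ i - (\<Sum>j\<in>?R. w i j * v $ j)"
    using i by (simp add: sum.remove[of "{0..<n}" i] sum_distrib_left sum_distrib_right sum_subtractf algebra_simps)
  ultimately show ?thesis using i by (simp add: shifted_lap_index algebra_simps)
qed

text \<open>For symmetric weights the Laplacian has zero column sums, so summing the entries of
  \<open>(\<lambda>I - L) v\<close> just multiplies the entry sum of \<open>v\<close> by \<open>\<lambda>\<close>.\<close>
lemma shifted_lap_entry_sum:
  assumes v: "v \<in> carrier_vec n" and sym: "\<And>i k. i < n \<Longrightarrow> k < n \<Longrightarrow> w i k = w k i"
  shows "(\<Sum>i\<in>{0..<n}. (shifted_lap n w lam *\<^sub>v v) $ i) = lam * (\<Sum>i\<in>{0..<n}. v $ i)"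
proof -
  let ?a = "\<lambda>i k. w i k * (v $ i - v $ k)"
  have "(\<Sum>i\<in>{0..<n}. \<Sum>k\<in>{0..<n}. ?a i k) = (\<Sum>k\<in>{0..<n}. \<Sum>i\<in>{0..<n}. - ?a k i)"
    by (subst sum.swap, intro sum.cong refl, auto simp: sym algebra_simps)
  hence zero: "(\<Sum>i\<in>{0..<n}. \<Sum>k\<in>{0..<n}. ?a i k) = 0" by (simp add: sum_negf)
  have "(\<Sum>i\<in>{0..<n}. (shifted_lap n w lam *\<^sub>v v) $ i) = (\<Sum>i\<in>{0..<n}. lam * v $ i - (\<Sum>k\<in>{0..<n}. ?a i k))"
    using v by (intro sum.cong refl shifted_lap_mult_vec) auto
  also have "\<dots> = lam * (\<Sum>i\<in>{0..<n}. v $ i)" using zero by (simp add: sum_subtractf sum_distrib_left)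
  finally show ?thesis .
qed

lemma char_poly_weighted_laplacian:
  "poly (char_poly (weighted_laplacian n w)) t = det (shifted_lap n w t)"
proof -
  have "poly (char_poly (weighted_laplacian n w)) t = det (- char_matrix (weighted_laplacian n w) t)"
    by (rule char_poly_matrix[OF weighted_laplacian_carrier])
  also have "- char_matrix (weighted_laplacian n w) t = shifted_lap n w t"
    by (rule eq_matI, auto simp: char_matrix_def shifted_lap_def weighted_laplacian_def)
  finally show ?thesis .
qed

text \<open>The constant vector lies in the kernel of every weighted Laplacian, so \<open>0\<close> is a root of
  its characteristic polynomial.\<close>
lemma shifted_lap_zero_singular:
  assumes "n > 0"
  shows "det (shifted_lap n w 0) = 0"
proof -
  have "shifted_lap n w 0 *\<^sub>v vec n (\<lambda>_. 1) = 0\<^sub>v n"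
    by (rule eq_vecI, subst shifted_lap_mult_vec, auto)
  moreover have "vec n (\<lambda>_. 1::real) \<noteq> 0\<^sub>v n"
    using assms by (metis index_vec index_zero_vec(1) zero_neq_one)
  ultimately show ?thesis
    using det_0_iff_vec_prod_zero_field[OF shifted_lap_carrier] by (auto intro!: exI[of _ "vec n (\<lambda>_. 1)"])
qed

definition shifted_lap_inv :: "nat \<Rightarrow> (nat \<Rightarrow> nat \<Rightarrow> real) \<Rightarrow> real \<Rightarrow> real mat" where
  "shifted_lap_inv n w lam = (1 / det (shifted_lap n w lam)) \<cdot>\<^sub>m adj_mat (shifted_lap n w lam)"

lemma shifted_lap_inv_carrier [simp]: "shifted_lap_inv n w lam \<in> carrier_mat n n"
  unfolding shifted_lap_inv_def using adj_mat(1)[OF shifted_lap_carrier] by simp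

lemma shifted_lap_inv_vec_carrier [simp]: "shifted_lap_inv n w lam *\<^sub>v v \<in> carrier_vec n"
  using shifted_lap_inv_carrier[of n w lam] unfolding carrier_vec_def carrier_mat_def by simp

lemma shifted_lap_inv_right:
  assumes "det (shifted_lap n w lam) \<noteq> 0"
  shows "shifted_lap n w lam * shifted_lap_inv n w lam = 1\<^sub>m n"
proof -
  let ?S = "shifted_lap n w lam"
  have "?S * shifted_lap_inv n w lam = (1 / det ?S) \<cdot>\<^sub>m (?S * adj_mat ?S)"
    unfolding shifted_lap_inv_def by (rule mult_smult_distrib[OF shifted_lap_carrier adj_mat(1)[OF shifted_lap_carrier]])
  also have "\<dots> = 1\<^sub>m n" unfolding adj_mat(2)[OF shifted_lap_carrier] using assms
    by (intro eq_matI) auto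
  finally show ?thesis .
qed

lemma shifted_lap_inv_left:
  assumes "det (shifted_lap n w lam) \<noteq> 0"
  shows "shifted_lap_inv n w lam * shifted_lap n w lam = 1\<^sub>m n"
proof -
  let ?S = "shifted_lap n w lam"
  have "shifted_lap_inv n w lam * ?S = (1 / det ?S) \<cdot>\<^sub>m (adj_mat ?S * ?S)"
    unfolding shifted_lap_inv_def by (rule mult_smult_assoc_mat[OF adj_mat(1)[OF shifted_lap_carrier] shifted_lap_carrier])
  also have "\<dots> = 1\<^sub>m n" unfolding adj_mat(3)[OF shifted_lap_carrier] using assms
    by (intro eq_matI) auto
  finally show ?thesis .
qed

lemma shifted_lap_solve:
  assumes "det (shifted_lap n w lam) \<noteq> 0" and "v \<in> carrier_vec n"
  shows "shifted_lap n w lam *\<^sub>v (shifted_lap_inv n w lam *\<^sub>v v) = v"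
    and "shifted_lap_inv n w lam *\<^sub>v (shifted_lap n w lam *\<^sub>v v) = v"
  using assms
  by (simp_all add: assoc_mult_mat_vec[symmetric, of _ n n _ n]
      shifted_lap_inv_right shifted_lap_inv_left)

lemma shifted_lap_aut_index:
  assumes bij: "bij_betw al {0..<n} {0..<n}" and inv: "\<And>i j. i < n \<Longrightarrow> j < n \<Longrightarrow> w (al i) (al j) = w i j"
    and i: "i < n" and j: "j < n"
  shows "shifted_lap n w lam $$ (al i, al j) = shifted_lap n w lam $$ (i, j)"
proof -
  have al: "al i < n" "al j < n" using bij i j by (auto dest: bij_betw_apply)
  have eq: "al i = al j \<longleftrightarrow> i = j" using bij i j by (auto simp: bij_betw_def inj_on_def)
  have row_sum: "(\<Sum>k\<in>{0..<n}-{m}. w m k) = (\<Sum>k\<in>{0..<n}. w m k) - w m m" if "m < n" for m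
    using that by (subst sum.remove[of _ m], auto)
  have "(\<Sum>k\<in>{0..<n}. w (al i) k) = (\<Sum>k\<in>{0..<n}. w (al i) (al k))"
    by (rule sum.reindex_bij_betw[OF bij, symmetric])
  also have "\<dots> = (\<Sum>k\<in>{0..<n}. w i k)" using i by (intro sum.cong, auto simp: inv)
  finally show ?thesis
    using al i j eq row_sum[of i] row_sum[of "al i"] inv[OF i i] inv[OF i j] by (auto simp: shifted_lap_index)
qed

lemma shifted_lap_inv_aut:
  assumes bij: "bij_betw al {0..<n} {0..<n}" and inv: "\<And>i j. i < n \<Longrightarrow> j < n \<Longrightarrow> w (al i) (al j) = w i j"
    and d: "det (shifted_lap n w lam) \<noteq> 0" and g: "g \<in> carrier_vec n"
    and g_inv: "\<And>i. i < n \<Longrightarrow> g $ (al i) = g $ i" and i: "i < n"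
  shows "(shifted_lap_inv n w lam *\<^sub>v g) $ (al i) = (shifted_lap_inv n w lam *\<^sub>v g) $ i"
proof -
  let ?S = "shifted_lap n w lam"
  define phi where "phi = shifted_lap_inv n w lam *\<^sub>v g"
  define psi where "psi = vec n (\<lambda>i. phi $ (al i))"
  have phi: "phi \<in> carrier_vec n" and psi: "psi \<in> carrier_vec n" unfolding phi_def psi_def by auto
  have al: "\<And>i. i < n \<Longrightarrow> al i < n" using bij by (auto dest: bij_betw_apply)
  have "?S *\<^sub>v psi = g"
  proof (rule eq_vecI)
    fix i assume "i < dim_vec g"
    hence i: "i < n" using g by auto
    have "(?S *\<^sub>v psi) $ i = (\<Sum>j\<in>{0..<n}. ?S $$ (al i, al j) * phi $ (al j))"
      using i by (simp add: scalar_prod_def row_def psi_def shifted_lap_aut_index[of al n w, OF bij inv])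
    also have "\<dots> = (\<Sum>k\<in>{0..<n}. ?S $$ (al i, k) * phi $ k)"
      by (rule sum.reindex_bij_betw[OF bij])
    also have "\<dots> = (?S *\<^sub>v phi) $ (al i)"
      using al[OF i] phi by (simp add: scalar_prod_def row_def)
    also have "\<dots> = g $ i" unfolding phi_def shifted_lap_solve(1)[OF d g] using g_inv[OF i] .
    finally show "(?S *\<^sub>v psi) $ i = g $ i" .
  qed (use g in auto)
  hence "psi = phi" unfolding phi_def using shifted_lap_solve(2)[OF d psi] by simp
  thus ?thesis using i unfolding phi_def[symmetric] psi_def by (metis index_vec)
qed

lemma exists_argmax:
  fixes f :: "nat \<Rightarrow> real"
  assumes "n > 0"
  shows "\<exists>u<n. \<forall>k<n. f k \<le> f u"
proof -
  have fin: "finite (f ` {0..<n})" and ne: "f ` {0..<n} \<noteq> {}" using assms by auto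
  obtain u where "u \<in> {0..<n}" "f u = Max (f ` {0..<n})" using Max_in[OF fin ne] by auto
  thus ?thesis using Max_ge[OF fin] by auto
qed

text \<open>Symmetric weights in \<open>[0,1]\<close> on \<open>n\<close> vertices: the Laplacian of a graph and of
  every "fractional" graph obtained by averaging edges.\<close>
locale unit_weights =
  fixes n :: nat and w :: "nat \<Rightarrow> nat \<Rightarrow> real"
  assumes w_range: "\<And>i k. i < n \<Longrightarrow> k < n \<Longrightarrow> 0 \<le> w i k \<and> w i k \<le> 1"
    and w_sym: "\<And>i k. i < n \<Longrightarrow> k < n \<Longrightarrow> w i k = w k i"
begin

text \<open>Since all
  weights are at most \<open>1\<close>, \<open>(L\<phi>)\<^sub>u \<le> n \<phi>\<^sub>u\<close> once \<open>\<phi>\<close> has entry sum \<open>0\<close>.\<close>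
lemma max_principle:
  assumes lam: "lam > real n" and phi: "phi \<in> carrier_vec n"
    and g: "shifted_lap n w lam *\<^sub>v phi = g" and g_sum: "(\<Sum>i\<in>{0..<n}. g $ i) = 0"
    and u: "u < n" and u_max: "\<And>k. k < n \<Longrightarrow> phi $ k \<le> phi $ u" and g_u: "g $ u \<le> 0"
    and k: "k < n"
  shows "phi $ k = 0"
proof -
  have "lam * (\<Sum>i\<in>{0..<n}. phi $ i) = 0"
    using shifted_lap_entry_sum[where w = w and lam = lam, OF phi w_sym] g g_sum by simp
  hence phi_sum: "(\<Sum>i\<in>{0..<n}. phi $ i) = 0" using lam by simp
  have "lam * phi $ u \<le> (\<Sum>k\<in>{0..<n}. w u k * (phi $ u - phi $ k))"
    using shifted_lap_mult_vec[OF u phi, of w lam] g g_u by simp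
  also have "\<dots> \<le> (\<Sum>k\<in>{0..<n}. phi $ u - phi $ k)"
    using u_max w_range[OF u] by (intro sum_mono) (simp add: mult_left_le_one_le)
  also have "\<dots> = real n * phi $ u" using phi_sum by (simp add: sum_subtractf)
  finally have "(lam - real n) * phi $ u \<le> 0" by (simp add: algebra_simps)
  hence "phi $ u \<le> 0" using lam by (simp add: mult_le_0_iff)
  hence "\<forall>i\<in>{0..<n}. - phi $ i = 0"
    using phi_sum u_max sum_nonneg_eq_0_iff[of "{0..<n}" "\<lambda>i. - phi $ i"]
    by (force simp: sum_negf)
  thus ?thesis using k by auto
qed

lemma max_attained_in:
  assumes lam: "lam > real n" and phi: "phi \<in> carrier_vec n"
    and g: "shifted_lap n w lam *\<^sub>v phi = g" and g_sum: "(\<Sum>i\<in>{0..<n}. g $ i) = 0"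
    and P: "P \<subseteq> {0..<n}" "P \<noteq> {}" and g_nonpos: "\<And>u. u < n \<Longrightarrow> u \<notin> P \<Longrightarrow> g $ u \<le> 0"
  shows "\<exists>p\<in>P. \<forall>k<n. phi $ k \<le> phi $ p"
proof -
  have "n > 0" using P by auto
  then obtain u where u: "u < n" "\<And>k. k < n \<Longrightarrow> phi $ k \<le> phi $ u"
    using exists_argmax[of n "\<lambda>k. phi $ k"] by auto
  show ?thesis
  proof (cases "u \<in> P")
    case True thus ?thesis using u by blast
  next
    case False
    have "\<And>k. k < n \<Longrightarrow> phi $ k = 0"
      by (rule max_principle[OF lam phi g g_sum u g_nonpos[OF u(1) False]])
    thus ?thesis using P by fastforce
  qed
qed

lemma det_nonzero:
  assumes lam: "lam > real n" and n: "n > 0"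
  shows "det (shifted_lap n w lam) \<noteq> 0"
proof
  assume "det (shifted_lap n w lam) = 0"
  then obtain v where v: "v \<in> carrier_vec n" "v \<noteq> 0\<^sub>v n" "shifted_lap n w lam *\<^sub>v v = 0\<^sub>v n"
    using det_0_iff_vec_prod_zero_field[OF shifted_lap_carrier] by blast
  obtain u where u: "u < n" "\<And>k. k < n \<Longrightarrow> v $ k \<le> v $ u"
    using exists_argmax[OF n, of "\<lambda>k. v $ k"] by auto
  have "\<And>k. k < n \<Longrightarrow> v $ k = 0"
    by (rule max_principle[OF lam v(1) v(3) _ u]) (auto simp: u(1))
  hence "v = 0\<^sub>v n" using v(1) by (intro eq_vecI) auto
  with v(2) show False by simp
qed

text \<open>The characteristic polynomial of \<open>L\<close> is monic and has no root beyond \<open>n\<close>, so it is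
  positive there.\<close>
lemma det_pos:
  assumes lam: "lam > real n" and n: "n > 0"
  shows "det (shifted_lap n w lam) > 0"
proof (rule ccontr)
  let ?p = "char_poly (weighted_laplacian n w)"
  assume "\<not> det (shifted_lap n w lam) > 0"
  with det_nonzero[OF lam n] have neg: "poly ?p lam < 0"
    unfolding char_poly_weighted_laplacian by simp
  have "lead_coeff ?p = 1"
    using degree_monic_char_poly[OF weighted_laplacian_carrier] by simp
  then obtain N where N: "\<And>x. x \<ge> N \<Longrightarrow> poly ?p x \<ge> 1"
    using poly_pinfty_gt_lc[of ?p] by auto
  define b where "b = max N (lam + 1)"
  have "poly ?p b \<ge> 1" and "lam < b" using N unfolding b_def by auto
  then obtain t where t: "lam < t" "poly ?p t = 0"
    using poly_IVT_pos[of lam b ?p] neg by auto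
  have "det (shifted_lap n w t) \<noteq> 0" using t(1) lam n by (intro det_nonzero) auto
  with t(2) show False unfolding char_poly_weighted_laplacian by simp
qed

lemma inv_symmetric:
  assumes d: "det (shifted_lap n w lam) \<noteq> 0" and a: "a \<in> carrier_vec n" and b: "b \<in> carrier_vec n"
  shows "a \<bullet> (shifted_lap_inv n w lam *\<^sub>v b) = b \<bullet> (shifted_lap_inv n w lam *\<^sub>v a)"
proof -
  let ?S = "shifted_lap n w lam" and ?T = "shifted_lap_inv n w lam"
  have Ta: "?T *\<^sub>v a \<in> carrier_vec n" and Tb: "?T *\<^sub>v b \<in> carrier_vec n" by auto
  have "a \<bullet> (?T *\<^sub>v b) = (?S *\<^sub>v (?T *\<^sub>v a)) \<bullet> (?T *\<^sub>v b)" using shifted_lap_solve(1)[OF d a] by simp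
  also have "\<dots> = (?T *\<^sub>v a) \<bullet> (?S *\<^sub>v (?T *\<^sub>v b))"
    by (rule sym_mat_scalar_prod[OF shifted_lap_carrier _ Ta Tb]) (auto simp: shifted_lap_index w_sym)
  also have "\<dots> = b \<bullet> (?T *\<^sub>v a)" using shifted_lap_solve(1)[OF d b] comm_scalar_prod[OF Ta b] by simp
  finally show ?thesis .
qed

end

section \<open>The comparison in the swap-symmetric setting\<close>

text \<open>The dipole \<open>e\<^sub>x - e\<^sub>y\<close>, and for a vertex set \<open>A\<close> the vector
  \<open>|A|/2 (e\<^sub>x + e\<^sub>y) - 1\<^sub>A\<close>: the part of the Laplacian that depends on the
  edges between \<open>{x, y}\<close> and \<open>A\<close> is built from these two vectors.\<close>
definition dipole :: "nat \<Rightarrow> nat \<Rightarrow> nat \<Rightarrow> real vec" where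
  "dipole n x y = vec n (\<lambda>i. (if i = x then 1 else 0) - (if i = y then 1 else 0))"

definition balanced_star :: "nat \<Rightarrow> nat \<Rightarrow> nat \<Rightarrow> nat set \<Rightarrow> real vec" where
  "balanced_star n x y A =
     vec n (\<lambda>i. (if i = x \<or> i = y then real (card A) / 2 else 0) - (if i \<in> A then 1 else 0))"

lemma dipole_carrier [simp]: "dipole n x y \<in> carrier_vec n"
  unfolding dipole_def by simp

lemma balanced_star_carrier [simp]: "balanced_star n x y A \<in> carrier_vec n"
  unfolding balanced_star_def by simp

lemma balanced_star_dim [simp]: "dim_vec (balanced_star n x y A) = n"
  unfolding balanced_star_def by simp

lemma dipole_scalar:
  assumes "x < n" "y < n" "x \<noteq> y" "v \<in> carrier_vec n"
  shows "dipole n x y \<bullet> v = v $ x - v $ y"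
proof -
  have "dipole n x y \<bullet> v = (\<Sum>i\<in>{0..<n}. (if i = x then v $ i else 0) - (if i = y then v $ i else 0))"
    using assms unfolding dipole_def scalar_prod_def by (intro sum.cong) auto
  thus ?thesis using assms by (simp add: sum_subtractf)
qed

lemma balanced_star_scalar:
  assumes x: "x < n" and y: "y < n" and xy: "x \<noteq> y" and v: "v \<in> carrier_vec n" and A: "A \<subseteq> {0..<n}"
  shows "balanced_star n x y A \<bullet> v = real (card A) / 2 * (v $ x + v $ y) - (\<Sum>i\<in>A. v $ i)"
proof -
  let ?c = "real (card A) / 2"
  have "balanced_star n x y A \<bullet> v = (\<Sum>i\<in>{0..<n}. (if i = x then ?c * v $ i else 0)
      + (if i = y then ?c * v $ i else 0) - (if i \<in> A then v $ i else 0))"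
    using v xy unfolding balanced_star_def scalar_prod_def by (intro sum.cong) (auto simp: left_diff_distrib)
  also have "\<dots> = ?c * v $ x + ?c * v $ y - (\<Sum>i\<in>{0..<n} \<inter> A. v $ i)"
    using x y by (simp add: sum.distrib sum_subtractf sum.inter_restrict)
  also have "{0..<n} \<inter> A = A" using A by auto
  finally show ?thesis by (simp add: algebra_simps)
qed

lemma entry_sum_scalar: "(\<Sum>i\<in>{0..<n}. v $ i) = (v :: real vec) \<bullet> vec n (\<lambda>_. 1)"
  unfolding scalar_prod_def by (auto intro: sum.cong)

lemma dipole_entry_sum:
  assumes "x < n" "y < n" "x \<noteq> y"
  shows "(\<Sum>i\<in>{0..<n}. dipole n x y $ i) = 0"
  using assms by (simp add: entry_sum_scalar dipole_scalar)

lemma balanced_star_entry_sum: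
  assumes "x < n" "y < n" "x \<noteq> y" "A \<subseteq> {0..<n}"
  shows "(\<Sum>i\<in>{0..<n}. balanced_star n x y A $ i) = 0"
proof -
  have "(\<Sum>i\<in>A. vec n (\<lambda>_. 1::real) $ i) = (\<Sum>i\<in>A. 1)" using assms(4) by (intro sum.cong) auto
  thus ?thesis using assms by (simp add: entry_sum_scalar balanced_star_scalar)
qed

lemma bij_fixed_set_iff:
  assumes bij: "bij_betw al V V" and fixes_A: "\<And>v. v \<in> A \<Longrightarrow> al v = v" and i: "i \<in> V"
  shows "al i \<in> A \<longleftrightarrow> i \<in> A"
proof
  assume "al i \<in> A"
  hence "al (al i) = al i" using fixes_A by auto
  moreover have "al i \<in> V" using bij i by (auto dest: bij_betw_apply)
  ultimately have "al i = i" using bij i by (auto simp: bij_betw_def dest: inj_onD)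
  thus "i \<in> A" using \<open>al i \<in> A\<close> by simp
qed (use fixes_A in auto)

lemma bij_swap_iff:
  assumes bij: "bij_betw al V V" and "x \<in> V" "y \<in> V" "al x = y" "al y = x" and i: "i \<in> V"
  shows "al i = x \<longleftrightarrow> i = y" and "al i = y \<longleftrightarrow> i = x"
  using assms by (auto simp: bij_betw_def dest: inj_onD)

locale swap_weights = unit_weights +
  fixes lam :: real and al :: "nat \<Rightarrow> nat" and x y :: nat
  assumes lam_gt: "lam > real n"
    and al_bij: "bij_betw al {0..<n} {0..<n}"
    and w_aut: "\<And>i j. i < n \<Longrightarrow> j < n \<Longrightarrow> w (al i) (al j) = w i j"
    and x_lt: "x < n" and y_lt: "y < n" and x_ne_y: "x \<noteq> y"
    and al_x: "al x = y" and al_y: "al y = x"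
begin

abbreviation "Sl \<equiv> shifted_lap n w lam"
abbreviation "Tl \<equiv> shifted_lap_inv n w lam"
abbreviation "dip \<equiv> dipole n x y"

lemma det_Sl_pos: "det Sl > 0"
  using det_pos[OF lam_gt] x_lt by simp

lemma det_Sl_nonzero: "det Sl \<noteq> 0"
  using det_Sl_pos by simp

definition swap_invariant :: "real vec \<Rightarrow> bool" where
  "swap_invariant v \<longleftrightarrow> v \<in> carrier_vec n \<and> (\<forall>i<n. v $ (al i) = v $ i)"

lemma swap_invariant_add_diff:
  assumes "swap_invariant a" "swap_invariant b"
  shows "swap_invariant (a + b)" and "swap_invariant (a - b)"
  using assms al_bij unfolding swap_invariant_def by (auto dest: bij_betw_apply)

lemma balanced_star_invariant:
  assumes "\<And>v. v \<in> A \<Longrightarrow> al v = v"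
  shows "swap_invariant (balanced_star n x y A)"
  using bij_fixed_set_iff[OF al_bij assms] bij_swap_iff[OF al_bij _ _ al_x al_y] x_lt y_lt al_bij
  unfolding swap_invariant_def balanced_star_def by (auto dest: bij_betw_apply)

text \<open>Solutions for invariant right-hand sides take equal values at \<open>x\<close> and \<open>y\<close>; hence
  they are orthogonal to the (anti-invariant) dipole.\<close>
lemma invariant_solution_xy:
  assumes "swap_invariant s"
  shows "(Tl *\<^sub>v s) $ x = (Tl *\<^sub>v s) $ y"
  using shifted_lap_inv_aut[OF al_bij w_aut det_Sl_nonzero, of s y] assms al_y y_lt
  unfolding swap_invariant_def by auto

lemma dipole_orthogonal:
  assumes "swap_invariant s"
  shows "dip \<bullet> (Tl *\<^sub>v s) = 0" and "s \<bullet> (Tl *\<^sub>v dip) = 0"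
proof -
  show o: "dip \<bullet> (Tl *\<^sub>v s) = 0"
    using dipole_scalar[OF x_lt y_lt x_ne_y] invariant_solution_xy[OF assms] by simp
  show "s \<bullet> (Tl *\<^sub>v dip) = 0"
    using inv_symmetric[OF det_Sl_nonzero, of s dip] o assms unfolding swap_invariant_def by simp
qed

lemma det_invariant_update:
  assumes "swap_invariant s"
  shows "det (Sl + c \<cdot>\<^sub>m sym_outer n dip s)
    = det Sl * (1 - c\<^sup>2 * (s \<bullet> (Tl *\<^sub>v s)) * (dip \<bullet> (Tl *\<^sub>v dip)))"
  using det_sym_rank2_update[OF shifted_lap_carrier shifted_lap_inv_carrier
      shifted_lap_inv_right[OF det_Sl_nonzero] dipole_carrier, of s c]
    dipole_orthogonal[OF assms] assms
  unfolding swap_invariant_def by simp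

text \<open>The potential \<open>\<phi>\<close> generated by the dipole is maximal at \<open>x\<close>, so its energy
  \<open>\<phi>\<^sub>x - \<phi>\<^sub>y\<close> is non-negative.\<close>
lemma dipole_energy_nonneg: "dip \<bullet> (Tl *\<^sub>v dip) \<ge> 0"
proof -
  define phi where "phi = Tl *\<^sub>v dip"
  have phi: "phi \<in> carrier_vec n" unfolding phi_def by simp
  have "Sl *\<^sub>v phi = dip" unfolding phi_def by (rule shifted_lap_solve(1)[OF det_Sl_nonzero dipole_carrier])
  from max_attained_in[OF lam_gt phi this dipole_entry_sum[OF x_lt y_lt x_ne_y], of "{x}"]
  have "phi $ y \<le> phi $ x" using x_lt y_lt by (auto simp: dipole_def)
  thus ?thesis using dipole_scalar[OF x_lt y_lt x_ne_y phi] unfolding phi_def by simp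
qed

text \<open>The potential generated by an invariant balanced star is maximal at \<open>x\<close> (and \<open>y\<close>);
  pairing it with any other balanced star gives a non-negative value.\<close>
lemma balanced_star_cross_nonneg:
  assumes A: "A \<subseteq> {0..<n} - {x, y}" and B: "B \<subseteq> {0..<n} - {x, y}"
    and B_fixed: "\<And>v. v \<in> B \<Longrightarrow> al v = v"
  shows "balanced_star n x y A \<bullet> (Tl *\<^sub>v balanced_star n x y B) \<ge> 0"
proof -
  define phi where "phi = Tl *\<^sub>v balanced_star n x y B"
  have phi: "phi \<in> carrier_vec n" unfolding phi_def by simp
  have "Sl *\<^sub>v phi = balanced_star n x y B"
    unfolding phi_def by (rule shifted_lap_solve(1)[OF det_Sl_nonzero balanced_star_carrier])
  moreover have "(\<Sum>i\<in>{0..<n}. balanced_star n x y B $ i) = 0"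
    using B by (intro balanced_star_entry_sum[OF x_lt y_lt x_ne_y]) auto
  moreover have "\<And>u. u < n \<Longrightarrow> u \<notin> {x, y} \<Longrightarrow> balanced_star n x y B $ u \<le> 0"
    by (simp add: balanced_star_def)
  ultimately obtain p where "p \<in> {x, y}" "\<forall>k<n. phi $ k \<le> phi $ p"
    using max_attained_in[OF lam_gt phi, of _ "{x, y}"] x_lt y_lt by auto
  moreover have phi_xy: "phi $ x = phi $ y"
    unfolding phi_def by (rule invariant_solution_xy[OF balanced_star_invariant[OF B_fixed]])
  ultimately have phi_max: "\<forall>k<n. phi $ k \<le> phi $ x" by auto
  have "balanced_star n x y A \<bullet> phi = (\<Sum>i\<in>A. phi $ x - phi $ i)"
    using balanced_star_scalar[OF x_lt y_lt x_ne_y phi, of A] A phi_xy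
    by (auto simp: sum_subtractf)
  also have "\<dots> \<ge> 0" using A phi_max by (intro sum_nonneg) auto
  finally show ?thesis unfolding phi_def .
qed

text \<open>With \<open>a, b\<close> the balanced stars of \<open>A, B\<close>, the difference of the
  two determinants equals \<open>det(\<lambda>I - L) \<cdot> (m\<^sup>T T m) \<cdot> (a\<^sup>T T b) \<ge> 0\<close>.\<close>
lemma swap_comparison:
  assumes A: "A \<subseteq> {0..<n} - {x, y}" and B: "B \<subseteq> {0..<n} - {x, y}"
    and fixed: "\<And>v. v \<in> A \<union> B \<Longrightarrow> al v = v"
  defines "a \<equiv> balanced_star n x y A" and "b \<equiv> balanced_star n x y B"
  shows "det (Sl + (1/2) \<cdot>\<^sub>m sym_outer n dip (a + b)) \<le> det (Sl + (-1/2) \<cdot>\<^sub>m sym_outer n dip (a - b))"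
proof -
  let ?mu = "dip \<bullet> (Tl *\<^sub>v dip)" and ?q = "\<lambda>v. v \<bullet> (Tl *\<^sub>v v)"
  have inv: "swap_invariant a" "swap_invariant b"
    unfolding a_def b_def using fixed by (auto intro!: balanced_star_invariant)
  have "det (Sl + (-1/2) \<cdot>\<^sub>m sym_outer n dip (a - b)) - det (Sl + (1/2) \<cdot>\<^sub>m sym_outer n dip (a + b))
      = det Sl * ?mu * (?q (a + b) - ?q (a - b)) / 4"
    unfolding det_invariant_update[OF swap_invariant_add_diff(1)[OF inv]]
      det_invariant_update[OF swap_invariant_add_diff(2)[OF inv]]
    by (simp add: power2_eq_square algebra_simps)
  also have "?q (a + b) - ?q (a - b) = 4 * (a \<bullet> (Tl *\<^sub>v b))"
    by (rule quad_polarization[OF shifted_lap_inv_carrier _ _ inv_symmetric[OF det_Sl_nonzero]])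
      (auto simp: a_def b_def)
  also have "det Sl * ?mu * (4 * (a \<bullet> (Tl *\<^sub>v b))) / 4 \<ge> 0"
    using det_Sl_pos dipole_energy_nonneg balanced_star_cross_nonneg[OF A B] fixed
    unfolding a_def b_def by simp
  finally show ?thesis by simp
qed

end

section \<open>Graphs and the K_xy-operation as weights\<close>

lemma laplacian_eq_weighted:
  assumes "simple_graph n F"
  shows "laplacian n F = weighted_laplacian n (\<lambda>i k. of_bool (F i k))"
proof (rule eq_matI)
  fix i j assume "i < dim_row (weighted_laplacian n (\<lambda>i k. of_bool (F i k)))"
    and "j < dim_col (weighted_laplacian n (\<lambda>i k. of_bool (F i k)))"
  hence i: "i < n" and j: "j < n" by (auto simp: weighted_laplacian_def)
  have "nbhd F i = ({0..<n} - {i}) \<inter> {k. F i k}"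
    using assms unfolding simple_graph_def nbhd_def by auto
  hence "real (card (nbhd F i)) = (\<Sum>k\<in>{0..<n}-{i}. of_bool (F i k))" by simp
  thus "laplacian n F $$ (i, j) = weighted_laplacian n (\<lambda>i k. of_bool (F i k)) $$ (i, j)"
    using i j by (auto simp: laplacian_def weighted_laplacian_def)
qed (auto simp: laplacian_def weighted_laplacian_def)

text \<open>Since \<open>0\<close> is a root of \<open>det(\<lambda>I - L)\<close>, dividing by \<open>\<lambda>\<close> is exact and
  \<open>P(t, G) = det(tI - L(G)) / t\<close> for \<open>t \<noteq> 0\<close>.\<close>
lemma lap_poly_eval:
  assumes F: "simple_graph n F" and t: "t \<noteq> 0" and n: "n > 0"
  shows "poly (lap_poly n F) t = det (shifted_lap n (\<lambda>i k. of_bool (F i k)) t) / t"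
proof -
  let ?p = "char_poly (weighted_laplacian n (\<lambda>i k. of_bool (F i k)))"
  have "poly ?p 0 = 0"
    using shifted_lap_zero_singular[OF n] by (simp add: char_poly_weighted_laplacian)
  hence "[:0, 1:] dvd ?p" using poly_eq_0_iff_dvd[of ?p 0] by simp
  hence "?p = [:0, 1:] * (?p div [:0, 1:])" by (rule dvd_mult_div_cancel[symmetric])
  hence "poly ?p t = poly ([:0, 1:] * (?p div [:0, 1:])) t" by simp
  hence "poly ?p t = t * poly (?p div [:0, 1:]) t" by simp
  thus ?thesis
    using t unfolding lap_poly_def laplacian_eq_weighted[OF F]
    by (simp add: char_poly_weighted_laplacian field_simps)
qed

lemma poly_nonneg_at_boundary:
  fixes p :: "real poly"
  assumes "\<And>t. t > a \<Longrightarrow> poly p t \<ge> 0"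
  shows "poly p a \<ge> 0"
proof -
  have "((\<lambda>t. poly p t) \<longlongrightarrow> poly p a) (at a)"
    using poly_isCont[of a p] by (simp add: isCont_def)
  hence "((\<lambda>t. poly p t) \<longlongrightarrow> poly p a) (at_right a)" by (rule tendsto_within_subset) simp
  moreover have "eventually (\<lambda>t. 0 \<le> poly p t) (at_right a)"
    using eventually_at_right_less[of a] by (rule eventually_mono) (simp add: assms)
  ultimately show ?thesis by (rule tendsto_lowerbound) simp
qed

text \<open>Changing the off-diagonal weights by a symmetric rank-two term \<open>c(m s\<^sup>T + s m\<^sup>T)\<close>
  with \<open>m\<close>, \<open>s\<close> of entry sum \<open>0\<close> changes \<open>\<lambda>I - L\<close> by exactly the same term: the row sums
  of the update vanish, so the diagonal absorbs its negated diagonal.\<close>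
lemma shifted_lap_update:
  assumes upd: "\<And>i k. i < n \<Longrightarrow> k < n \<Longrightarrow> i \<noteq> k \<Longrightarrow> w' i k = w i k + c * sym_outer n m s $$ (i, k)"
    and m_sum: "(\<Sum>i\<in>{0..<n}. m $ i) = 0" and s_sum: "(\<Sum>i\<in>{0..<n}. s $ i) = 0"
  shows "shifted_lap n w' t = shifted_lap n w t + c \<cdot>\<^sub>m sym_outer n m s"
proof (rule eq_matI)
  fix i j assume "i < dim_row (shifted_lap n w t + c \<cdot>\<^sub>m sym_outer n m s)"
    and "j < dim_col (shifted_lap n w t + c \<cdot>\<^sub>m sym_outer n m s)"
  hence i: "i < n" and j: "j < n" by (auto simp: sym_outer_def)
  show "shifted_lap n w' t $$ (i, j) = (shifted_lap n w t + c \<cdot>\<^sub>m sym_outer n m s) $$ (i, j)"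
  proof (cases "i = j")
    case False
    thus ?thesis using i j upd[OF i j False] by (simp add: shifted_lap_index sym_outer_def)
  next
    case True
    have rest: "(\<Sum>k\<in>{0..<n}-{i}. v $ k) = - v $ i" if "(\<Sum>k\<in>{0..<n}. v $ k) = 0" for v :: "real vec"
      using that i by (simp add: sum.remove[of "{0..<n}" i])
    have "(\<Sum>k\<in>{0..<n}-{i}. w' i k) = (\<Sum>k\<in>{0..<n}-{i}. w i k + c * (m $ i * s $ k + s $ i * m $ k))"
      using i upd by (intro sum.cong) (auto simp: sym_outer_index)
    also have "\<dots> = (\<Sum>k\<in>{0..<n}-{i}. w i k)
        + c * (m $ i * (\<Sum>k\<in>{0..<n}-{i}. s $ k) + s $ i * (\<Sum>k\<in>{0..<n}-{i}. m $ k))"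
      by (simp add: sum.distrib sum_distrib_left algebra_simps)
    finally show ?thesis
      using True i rest[OF m_sum] rest[OF s_sum] by (simp add: shifted_lap_index sym_outer_def algebra_simps)
  qed
qed (auto simp: sym_outer_def)

definition star_edge :: "nat \<Rightarrow> nat set \<Rightarrow> nat \<Rightarrow> nat \<Rightarrow> bool" where
  "star_edge x A i k \<longleftrightarrow> (i = x \<and> k \<in> A) \<or> (k = x \<and> i \<in> A)"

definition star_ind :: "nat \<Rightarrow> nat set \<Rightarrow> nat \<Rightarrow> nat \<Rightarrow> real" where
  "star_ind x A i k = of_bool (star_edge x A i k)"

lemma del_star_eq: "del_star E x A u v \<longleftrightarrow> E u v \<and> \<not> star_edge x A u v"
  unfolding del_star_def star_edge_def by simp

lemma star_edge_sym: "star_edge x A i k \<longleftrightarrow> star_edge x A k i"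
  unfolding star_edge_def by auto

lemma star_ind_union:
  assumes "A \<inter> B = {}" and "x \<notin> A \<union> B"
  shows "star_ind x (A \<union> B) i k = star_ind x A i k + star_ind x B i k"
  using assms unfolding star_ind_def star_edge_def by auto

lemma star_ind_move:
  assumes "i < n" "k < n" "i \<noteq> k" "x \<noteq> y" "A \<subseteq> {0..<n} - {x, y}"
  shows "star_ind y A i k - star_ind x A i k = sym_outer n (dipole n x y) (balanced_star n x y A) $$ (i, k)"
  using assms unfolding star_ind_def star_edge_def dipole_def balanced_star_def sym_outer_def by auto

text \<open>Write \<open>X\<close>, \<open>Y\<close> for the private
  neighbourhoods of \<open>x\<close> and \<open>y\<close> outside \<open>K\<close>, and \<open>core\<close> for \<open>G - ([x, X] \<union> [y, Y])\<close>,
  the graph carrying the automorphism in the symmetric case.\<close>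
locale Kxy_setting =
  fixes n :: nat and E :: "nat \<Rightarrow> nat \<Rightarrow> bool" and K :: "nat set" and x y :: nat
  assumes simple: "simple_graph n E" and valid: "Kxy_valid n E K x y"
begin

abbreviation "X \<equiv> Xset E K x y"
abbreviation "Y \<equiv> Xset E K y x"
abbreviation "core \<equiv> del_star (del_star E x X) y Y"

lemma edge_sym: "E u v \<Longrightarrow> E v u"
  and edge_lt: "E u v \<Longrightarrow> u < n \<and> v < n"
  and edge_irrefl: "\<not> E u u"
  using simple unfolding simple_graph_def by blast+

lemma x_lt: "x < n" and y_lt: "y < n" and x_ne_y: "x \<noteq> y" and x_in_K: "x \<in> K" and y_in_K: "y \<in> K"
  using valid unfolding Kxy_valid_def by auto

lemma X_iff: "v \<in> X \<longleftrightarrow> E x v \<and> v \<notin> K \<and> \<not> E y v"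
  and Y_iff: "v \<in> Y \<longleftrightarrow> E y v \<and> v \<notin> K \<and> \<not> E x v"
  unfolding Xset_def nbhd_def by auto

lemma X_outside: "X \<subseteq> {0..<n} - {x, y}"
  and Y_outside: "Y \<subseteq> {0..<n} - {x, y}"
  and X_Y_disjoint: "X \<inter> Y = {}"
proof -
  have "v < n \<and> v \<noteq> x \<and> v \<noteq> y" if "v \<in> X \<union> Y" for v
    using that X_iff Y_iff edge_lt x_in_K y_in_K by blast
  thus "X \<subseteq> {0..<n} - {x, y}" "Y \<subseteq> {0..<n} - {x, y}" by auto
  show "X \<inter> Y = {}" using X_iff Y_iff by blast
qed

lemma xy_outside: "x \<notin> X \<union> Y" "y \<notin> X \<union> Y"
  and X_sub: "X \<subseteq> {0..<n}" and Y_sub: "Y \<subseteq> {0..<n}"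
  using X_outside Y_outside by auto

lemma star_edge_facts:
  shows "star_edge x X u v \<Longrightarrow> E u v" and "star_edge y Y u v \<Longrightarrow> E u v"
    and "star_edge y X u v \<Longrightarrow> \<not> E u v" and "star_edge x Y u v \<Longrightarrow> \<not> E u v"
    and "\<not> (star_edge x X u v \<and> star_edge y Y u v)" and "\<not> (star_edge y X u v \<and> star_edge y Y u v)"
  using X_iff Y_iff edge_sym x_ne_y xy_outside X_Y_disjoint unfolding star_edge_def by blast+

lemma Kxy_op_eq: "Kxy_op E K x y u v \<longleftrightarrow> (E u v \<and> \<not> star_edge x X u v) \<or> star_edge y X u v"
  unfolding Kxy_op_def del_star_eq star_edge_def by blast

lemma Kxy_op_simple: "simple_graph n (Kxy_op E K x y)"
proof -
  have "Kxy_op E K x y u v \<Longrightarrow> u < n \<and> v < n" for u v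
    using X_outside y_lt edge_lt unfolding Kxy_op_eq star_edge_def by auto
  moreover have "Kxy_op E K x y u v \<Longrightarrow> Kxy_op E K x y v u" for u v
    using edge_sym star_edge_sym unfolding Kxy_op_eq by blast
  moreover have "\<not> Kxy_op E K x y u u" for u
    using X_outside edge_irrefl unfolding Kxy_op_eq star_edge_def by auto
  ultimately show ?thesis unfolding simple_graph_def by blast
qed

lemma edge_weight_split:
  "of_bool (E i k) = of_bool (core i k) + star_ind x X i k + star_ind y Y i k"
proof -
  have union: "E i k \<longleftrightarrow> core i k \<or> star_edge x X i k \<or> star_edge y Y i k"
    using star_edge_facts(1,2) unfolding del_star_eq by blast
  have disjoint: "\<not> (core i k \<and> star_edge x X i k)" "\<not> (core i k \<and> star_edge y Y i k)"
      "\<not> (star_edge x X i k \<and> star_edge y Y i k)"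
    using star_edge_facts(5) unfolding del_star_eq by blast+
  show ?thesis
    by (cases "core i k"; cases "star_edge x X i k"; cases "star_edge y Y i k")
      (use union disjoint in \<open>simp_all add: star_ind_def\<close>)
qed

lemma op_weight_split:
  "of_bool (Kxy_op E K x y i k) = of_bool (core i k) + star_ind y X i k + star_ind y Y i k"
proof -
  have union: "Kxy_op E K x y i k \<longleftrightarrow> core i k \<or> star_edge y X i k \<or> star_edge y Y i k"
    using star_edge_facts(2,5) unfolding Kxy_op_eq del_star_eq by blast
  have disjoint: "\<not> (core i k \<and> star_edge y X i k)" "\<not> (core i k \<and> star_edge y Y i k)"
      "\<not> (star_edge y X i k \<and> star_edge y Y i k)"
    using star_edge_facts(3,6) unfolding del_star_eq by blast+
  show ?thesis
    by (cases "core i k"; cases "star_edge y X i k"; cases "star_edge y Y i k")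
      (use union disjoint in \<open>simp_all add: star_ind_def\<close>)
qed

definition mid_weight :: "nat \<Rightarrow> nat \<Rightarrow> real" where
  "mid_weight i k = of_bool (core i k) + (star_ind x (X \<union> Y) i k + star_ind y (X \<union> Y) i k) / 2"

text \<open>The middle weights are symmetric and lie in \<open>[0, 1]\<close>, because the core contains none of
  the four stars between \<open>{x, y}\<close> and \<open>X \<union> Y\<close>.\<close>
lemma mid_weight_unit: "unit_weights n mid_weight"
proof
  fix i k
  have "core i k \<Longrightarrow> \<not> star_edge x (X \<union> Y) i k \<and> \<not> star_edge y (X \<union> Y) i k"
    using star_edge_facts(3,4) unfolding del_star_eq star_edge_def by blast
  thus "0 \<le> mid_weight i k \<and> mid_weight i k \<le> 1"
    unfolding mid_weight_def star_ind_def by (cases "core i k") auto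
  have "core i k \<longleftrightarrow> core k i" using edge_sym star_edge_sym unfolding del_star_eq by blast
  thus "mid_weight i k = mid_weight k i"
    unfolding mid_weight_def star_ind_def using star_edge_sym[of _ _ i k] by simp
qed

text \<open>An automorphism of the core that swaps \<open>x\<close>, \<open>y\<close> and fixes \<open>X \<union> Y\<close> pointwise preserves
  the middle weights, since it swaps the stars \<open>[x, X \<union> Y]\<close> and \<open>[y, X \<union> Y]\<close>.\<close>
lemma mid_weight_aut:
  assumes aut: "graph_aut n core al" and al_x: "al x = y" and al_y: "al y = x"
    and fixed: "\<And>v. v \<in> X \<union> Y \<Longrightarrow> al v = v" and i: "i < n" and j: "j < n"
  shows "mid_weight (al i) (al j) = mid_weight i j"
proof -
  have bij: "bij_betw al {0..<n} {0..<n}" using aut unfolding graph_aut_def by simp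
  have "core (al i) (al j) \<longleftrightarrow> core i j" using aut i j unfolding graph_aut_def by simp
  moreover have "star_edge x (X \<union> Y) (al i) (al j) \<longleftrightarrow> star_edge y (X \<union> Y) i j"
    and "star_edge y (X \<union> Y) (al i) (al j) \<longleftrightarrow> star_edge x (X \<union> Y) i j"
    using i j x_lt y_lt bij_swap_iff[OF bij _ _ al_x al_y] bij_fixed_set_iff[OF bij fixed]
    unfolding star_edge_def by auto
  ultimately show ?thesis unfolding mid_weight_def star_ind_def by simp
qed

lemma shifted_edge_weight:
  "shifted_lap n (\<lambda>i k. of_bool (E i k)) t = shifted_lap n mid_weight t
     + (-1/2) \<cdot>\<^sub>m sym_outer n (dipole n x y) (balanced_star n x y X - balanced_star n x y Y)"
proof (rule shifted_lap_update)
  fix i k assume ik: "i < n" "k < n" "i \<noteq> k"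
  show "of_bool (E i k) = mid_weight i k
      + (-1/2) * sym_outer n (dipole n x y) (balanced_star n x y X - balanced_star n x y Y) $$ (i, k)"
    using edge_weight_split[of i k] star_ind_union[OF X_Y_disjoint xy_outside(1), of i k]
      star_ind_union[OF X_Y_disjoint xy_outside(2), of i k]
      star_ind_move[OF ik x_ne_y X_outside] star_ind_move[OF ik x_ne_y Y_outside]
      sym_outer_add_diff(2)[OF balanced_star_carrier[of n x y X] balanced_star_carrier[of n x y Y] ik(1,2),
        of "dipole n x y"]
    unfolding mid_weight_def by argo
qed (use dipole_entry_sum[OF x_lt y_lt x_ne_y] balanced_star_entry_sum[OF x_lt y_lt x_ne_y X_sub]
       balanced_star_entry_sum[OF x_lt y_lt x_ne_y Y_sub] in \<open>simp_all add: sum_subtractf\<close>)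

lemma shifted_op_weight:
  "shifted_lap n (\<lambda>i k. of_bool (Kxy_op E K x y i k)) t = shifted_lap n mid_weight t
     + (1/2) \<cdot>\<^sub>m sym_outer n (dipole n x y) (balanced_star n x y X + balanced_star n x y Y)"
proof (rule shifted_lap_update)
  fix i k assume ik: "i < n" "k < n" "i \<noteq> k"
  show "of_bool (Kxy_op E K x y i k) = mid_weight i k
      + (1/2) * sym_outer n (dipole n x y) (balanced_star n x y X + balanced_star n x y Y) $$ (i, k)"
    using op_weight_split[of i k] star_ind_union[OF X_Y_disjoint xy_outside(1), of i k]
      star_ind_union[OF X_Y_disjoint xy_outside(2), of i k]
      star_ind_move[OF ik x_ne_y X_outside] star_ind_move[OF ik x_ne_y Y_outside]
      sym_outer_add_diff(1)[OF balanced_star_carrier[of n x y X] balanced_star_carrier[of n x y Y] ik(1,2),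
        of "dipole n x y"]
    unfolding mid_weight_def by argo
qed (use dipole_entry_sum[OF x_lt y_lt x_ne_y] balanced_star_entry_sum[OF x_lt y_lt x_ne_y X_sub]
       balanced_star_entry_sum[OF x_lt y_lt x_ne_y Y_sub] in \<open>simp_all add: sum.distrib\<close>)

lemma lap_poly_compare:
  assumes aut: "graph_aut n core al" and al_x: "al x = y" and al_y: "al y = x"
    and fixed: "\<And>v. v \<in> X \<union> Y \<Longrightarrow> al v = v" and t: "t > real n"
  shows "poly (lap_poly n (Kxy_op E K x y)) t \<le> poly (lap_poly n E) t"
proof -
  interpret swap_weights n mid_weight t al x y
  proof (rule swap_weights.intro[OF mid_weight_unit], unfold_locales)
    show "bij_betw al {0..<n} {0..<n}" using aut unfolding graph_aut_def by simp
  qed (use al_x al_y t x_lt y_lt x_ne_y mid_weight_aut[OF aut al_x al_y fixed] in auto)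
  have "det (shifted_lap n (\<lambda>i k. of_bool (Kxy_op E K x y i k)) t)
      \<le> det (shifted_lap n (\<lambda>i k. of_bool (E i k)) t)"
    unfolding shifted_edge_weight shifted_op_weight
    by (rule swap_comparison[OF X_outside Y_outside fixed])
  moreover have "t > 0" "n > 0" using t x_lt by auto
  ultimately show ?thesis
    using lap_poly_eval[OF simple] lap_poly_eval[OF Kxy_op_simple] by (simp add: divide_right_mono)
qed

end

theorem mainTheorem3:
  fixes n :: nat and E :: "nat \<Rightarrow> nat \<Rightarrow> bool" and K :: "nat set" and x y :: nat
    and lam :: real
  assumes "simple_graph n E"
    and "Kxy_valid n E K x y"
    and "Kxy_symmetric n E K x y"
    and "lam \<ge> real n"
  shows "poly (lap_poly n E) lam \<ge> poly (lap_poly n (Kxy_op E K x y)) lam"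
proof -
  interpret Kxy_setting n E K x y using assms(1,2) by unfold_locales
  obtain al where aut: "graph_aut n core al" and al_x: "al x = y" and al_y: "al y = x"
    and fixed: "\<And>v. v \<in> X \<union> Y \<Longrightarrow> al v = v"
    using assms(3) unfolding Kxy_symmetric_def by blast
  have "poly (lap_poly n E - lap_poly n (Kxy_op E K x y)) lam \<ge> 0"
  proof (rule poly_nonneg_at_boundary)
    fix t assume "t > lam"
    with lap_poly_compare[OF aut al_x al_y fixed le_less_trans[OF assms(4)]]
    show "poly (lap_poly n E - lap_poly n (Kxy_op E K x y)) t \<ge> 0"
      by (simp only: poly_diff diff_ge_0_iff_ge)
  qed
  thus ?thesis by (simp only: poly_diff diff_ge_0_iff_ge)
qed

end
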